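(* Let $\nu\ge0$, $\omega_{av}(0)\in\mathbb{R}$, $v_c(0)\in\mathbb{C}$ with $v_c(0)\ne-1$, and $\omega_{-1}(0)\in\mathbb{C}\setminus\{0\}$, and let $(\omega_{-1}(t),v_c(t),\omega_{av}(t))$ solve $$\frac{d\omega_{-1}}{dt}=(\mathrm{i}\omega_{av}-\nu)\omega_{-1}+\frac{2\omega_{-1}^2}{1+v_c},\qquad\frac{dv_c}{dt}=\omega_{-1},\qquad\frac{d\omega_{av}}{dt}=-\nu\omega_{av}$$ on a time interval $I\ni 0$. Then the trajectory $\{v_c(t):t\in I\}$ is contained in a circle or a straight line in $\mathbb{C}$. More precisely, when $\omega_{av}(0)=0$, one has $v_c(t)=\frac{v_c(0)+1}{1-\Omega\theta(t)}-1$ with $\Omega=\frac{\omega_{-1}(0)}{1+v_c(0)}$ and $\theta(t)=\frac{1-e^{-\nu t}}{\nu}$ ($\theta(t)=t$ if $\nu=0$), and the trajectory lies on a circle if $\mathrm{Im}\,\Omega\ne0$ and on a straight line if $\mathrm{Im}\,\Omega=0$.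
   Context: These are the pole dynamics equations for the generalized Constantin–Lax–Majda equation with $a=0$, $\sigma=0$ on the circle, for a solution $\tilde\omega=\omega_++\omega_-+\omega_{av}$ with $\omega_-(x,t)=\omega_{-1}(t)\left[\frac{1}{\tan(x/2)-\mathrm{i}v_c(t)}-\frac{1}{-\mathrm{i}-\mathrm{i}v_c(t)}\right]$ and $\omega_+(x,t)=\overline{\omega_-(\bar x,t)}$. *)

theory Defs
  imports "HOL-Analysis.Analysis"
begin

definition on_circle :: "complex set \<Rightarrow> bool" where
  "on_circle S \<longleftrightarrow> (\<exists>c r. r > 0 \<and> S \<subseteq> sphere c r)"

definition on_line :: "complex set \<Rightarrow> bool" where
  "on_line S \<longleftrightarrow> (\<exists>a b. b \<noteq> 0 \<and> S \<subseteq> range (\<lambda>s::real. a + complex_of_real s * b))"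

definition theta :: "real \<Rightarrow> real \<Rightarrow> real" where
  "theta \<nu> t = (if \<nu> = 0 then t else (1 - exp (- \<nu> * t)) / \<nu>)"

end

theory Submission
  imports Defs
begin

text \<open>
  With \<open>u = 1 + v\<^sub>c\<close>, the quantity \<open>q = \<omega>\<^sub>-\<^sub>1 / u\<^sup>2\<close> satisfies the linear equation
  \<open>q' = (\<i>\<omega>\<^sub>a\<^sub>v - \<nu>) q\<close>, and \<open>\<omega>\<^sub>a\<^sub>v(t) = \<omega>\<^sub>a\<^sub>v(0) e\<^sup>-\<^sup>\<nu>\<^sup>t\<close>; hence
  \<open>q(t) = q(0) \<theta>'(t) exp(\<i>\<kappa>\<theta>(t))\<close> with \<open>\<kappa> = \<omega>\<^sub>a\<^sub>v(0)\<close>. Since \<open>(1/u)' = -q\<close>,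
  \<open>1/u = 1/u(0) - q(0) \<Phi>\<^sub>\<kappa>(\<theta>(t))\<close> where \<open>\<Phi>\<^sub>\<kappa> = phase_integral \<kappa>\<close> is the primitive of
  \<open>s \<mapsto> exp(\<i>\<kappa>s)\<close> vanishing at 0. For \<open>\<kappa> \<noteq> 0\<close> this moves on a circle, for \<open>\<kappa> = 0\<close> on a line, and
  \<open>v\<^sub>c = 1/(1/u) - 1\<close> is obtained by an inversion followed by a translation, both of
  which map circles and lines to circles and lines.
\<close>

lemma on_circle_subset: "S \<subseteq> T \<Longrightarrow> on_circle T \<Longrightarrow> on_circle S"
  unfolding on_circle_def by blast

lemma on_line_subset: "S \<subseteq> T \<Longrightarrow> on_line T \<Longrightarrow> on_line S"
  unfolding on_line_def by blast

lemma on_circle_affine_image: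
  assumes "a \<noteq> 0" "on_circle S"
  shows "on_circle ((\<lambda>z. a * z + b) ` S)"
proof -
  obtain c r where "r > 0" "S \<subseteq> sphere c r"
    using assms(2) unfolding on_circle_def by blast
  then have "(\<lambda>z. a * z + b) ` S \<subseteq> sphere (a * c + b) (cmod a * r)"
    by (auto simp: dist_norm norm_mult simp flip: right_diff_distrib)
  moreover have "cmod a * r > 0"
    using \<open>r > 0\<close> assms(1) by simp
  ultimately show ?thesis
    unfolding on_circle_def by blast
qed

lemma on_line_affine_image:
  assumes "a \<noteq> 0" "on_line S"
  shows "on_line ((\<lambda>z. a * z + b) ` S)"
proof -
  obtain p d where "d \<noteq> 0" "S \<subseteq> range (\<lambda>s::real. p + of_real s * d)"
    using assms(2) unfolding on_line_def by blast
  then have "(\<lambda>z. a * z + b) ` S \<subseteq> range (\<lambda>s::real. (a * p + b) + of_real s * (a * d))"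
    by (force simp: algebra_simps)
  moreover have "a * d \<noteq> 0"
    using \<open>d \<noteq> 0\<close> assms(1) by simp
  ultimately show ?thesis
    unfolding on_line_def by blast
qed

lemma diff_mult_mem_sphere:
  fixes a b x c :: complex
  shows "x \<in> sphere c r \<Longrightarrow> a - b * x \<in> sphere (a - b * c) (cmod b * r)"
  by (simp add: dist_norm norm_mult norm_minus_commute flip: right_diff_distrib)

lemma inverse_mem_sphere:
  fixes z m :: complex
  assumes "z \<in> sphere m \<rho>" "z \<noteq> 0" "cmod m \<noteq> \<rho>"
  defines "k \<equiv> (cmod m)\<^sup>2 - \<rho>\<^sup>2"
  shows "inverse z \<in> sphere (cnj m / of_real k) (\<rho> / \<bar>k\<bar>)"
proof -
  have \<rho>: "\<rho> \<ge> 0" using assms(1) by auto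
  have k: "k \<noteq> 0"
    using assms(3) \<rho> unfolding k_def by (auto simp: power2_eq_iff_nonneg)
  define w where "w = inverse z"
  have "cmod (z - m) = \<rho>"
    using assms(1) by (simp add: dist_norm norm_minus_commute)
  then have "(z - m) * cnj (z - m) = of_real (\<rho>\<^sup>2)"
    by (metis complex_norm_square)
  moreover have "m * cnj m = of_real k + of_real (\<rho>\<^sup>2)"
    unfolding k_def by (simp flip: complex_norm_square)
  moreover have "z * w = 1" "cnj z * cnj w = 1"
    using assms(2) by (simp_all add: w_def complex_cnj_inverse)
  ultimately have "(of_real k * w - cnj m) * cnj (of_real k * w - cnj m) = of_real (\<rho>\<^sup>2)"
    by simp algebra
  then have "(cmod (of_real k * w - cnj m))\<^sup>2 = \<rho>\<^sup>2"
    by (metis complex_norm_square of_real_eq_iff)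
  then have "cmod (of_real k * w - cnj m) = \<rho>"
    using \<rho> by (simp add: power2_eq_iff_nonneg)
  then have "cmod (of_real k * (cnj m / of_real k - w)) = \<rho>"
    using k by (simp add: algebra_simps norm_minus_commute)
  then show ?thesis
    using k by (simp add: dist_norm w_def norm_mult eq_divide_eq mult.commute)
qed

lemma inverse_mem_sphere_through_0_iff:
  fixes v c :: complex
  assumes "v \<noteq> 0"
  shows "inverse v \<in> sphere c (cmod c) \<longleftrightarrow> Re (c * v) = 1 / 2"
proof -
  define w where "w = inverse v"
  have inv: "w * v = 1" "cnj w * cnj v = 1"
    using assms by (simp_all add: w_def complex_cnj_inverse)
  have "inverse v \<in> sphere c (cmod c) \<longleftrightarrow> cmod (w - c) = cmod c"
    by (simp add: w_def dist_norm norm_minus_commute)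
  also have "\<dots> \<longleftrightarrow> (w - c) * cnj (w - c) = c * cnj c"
    by (metis complex_norm_square norm_ge_zero of_real_eq_iff power2_eq_iff_nonneg)
  also have "\<dots> \<longleftrightarrow> c * v + cnj (c * v) = 1"
  proof
    assume "(w - c) * cnj (w - c) = c * cnj c"
    with inv show "c * v + cnj (c * v) = 1" by simp algebra
  next
    assume "c * v + cnj (c * v) = 1"
    with inv show "(w - c) * cnj (w - c) = c * cnj c" by simp algebra
  qed
  also have "\<dots> \<longleftrightarrow> Re (c * v) = 1 / 2"
    by (simp add: complex_eq_iff algebra_simps)
  finally show ?thesis .
qed

lemma on_line_Re_mult_eq:
  fixes m :: complex
  assumes "m \<noteq> 0"
  shows "on_line {w. Re (m * w) = a}"
proof -
  have "{w. Re (m * w) = a} \<subseteq> range (\<lambda>s::real. of_real a / m + of_real s * (\<i> / m))"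
  proof
    fix w assume "w \<in> {w. Re (m * w) = a}"
    then have "m * w = of_real a + of_real (Im (m * w)) * \<i>"
      by (simp add: complex_eq_iff)
    then have "w = of_real a / m + of_real (Im (m * w)) * (\<i> / m)"
      using assms by (simp add: field_simps)
    then show "w \<in> range (\<lambda>s::real. of_real a / m + of_real s * (\<i> / m))"
      by blast
  qed
  moreover have "\<i> / m \<noteq> 0"
    using assms by simp
  ultimately show ?thesis
    unfolding on_line_def by blast
qed

lemma inverse_image_sphere_on_circle_or_line:
  fixes S :: "complex set"
  assumes "\<rho> > 0" "S \<subseteq> sphere m \<rho>" "0 \<notin> S"
  shows "on_circle (inverse ` S) \<or> on_line (inverse ` S)"
proof (cases "cmod m = \<rho>")
  case False
  define k where "k = (cmod m)\<^sup>2 - \<rho>\<^sup>2"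
  have "k \<noteq> 0"
    using False assms(1) unfolding k_def by (auto simp: power2_eq_iff_nonneg)
  moreover have "inverse ` S \<subseteq> sphere (cnj m / of_real k) (\<rho> / \<bar>k\<bar>)"
    using inverse_mem_sphere False assms(2,3) unfolding k_def by blast
  moreover have "\<rho> / \<bar>k\<bar> > 0"
    using \<open>k \<noteq> 0\<close> assms(1) by simp
  ultimately have "on_circle (inverse ` S)"
    unfolding on_circle_def by blast
  then show ?thesis ..
next
  case True
  have "inverse ` S \<subseteq> {w. Re (m * w) = 1 / 2}"
  proof
    fix w assume "w \<in> inverse ` S"
    then obtain z where "z \<in> S" "w = inverse z" by blast
    then have "inverse w \<in> sphere m (cmod m)" "w \<noteq> 0"
      using True assms(2,3) by auto
    then show "w \<in> {w. Re (m * w) = 1 / 2}"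
      using inverse_mem_sphere_through_0_iff by blast
  qed
  moreover have "m \<noteq> 0"
    using True assms(1) by auto
  ultimately show ?thesis
    using on_line_Re_mult_eq on_line_subset by blast
qed

lemma on_circle_inverse_line:
  assumes "Im \<Omega> \<noteq> 0"
  shows "on_circle (range (\<lambda>s::real. inverse (1 - \<Omega> * of_real s)))"
proof -
  define c where "c = Complex (1 / 2) (Re \<Omega> / (2 * Im \<Omega>))"
  have "inverse (1 - \<Omega> * of_real s) \<in> sphere c (cmod c)" for s
  proof -
    have "Re (c * (1 - \<Omega> * of_real s)) = 1 / 2"
      using assms unfolding c_def by (simp add: field_simps)
    moreover have "v \<noteq> 0" if "Re (c * v) = 1 / 2" for v
      using that by auto
    ultimately show ?thesis
      using inverse_mem_sphere_through_0_iff by blast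
  qed
  then have "range (\<lambda>s::real. inverse (1 - \<Omega> * of_real s)) \<subseteq> sphere c (cmod c)"
    by blast
  moreover have "cmod c > 0"
    by (simp add: c_def complex_eq_iff)
  ultimately show ?thesis
    unfolding on_circle_def by blast
qed

lemma on_line_inverse_real_line:
  assumes "Im \<Omega> = 0"
  shows "on_line (range (\<lambda>s::real. inverse (1 - \<Omega> * of_real s)))"
proof -
  have "range (\<lambda>s::real. inverse (1 - \<Omega> * of_real s)) \<subseteq> {w. Re (\<i> * w) = 0}"
    using assms by (simp add: image_subset_iff)
  then show ?thesis
    using on_line_Re_mult_eq[of \<i> 0] on_line_subset by auto
qed

lemma has_vector_derivative_inverse:
  fixes f :: "real \<Rightarrow> 'a::real_normed_field"
  assumes "(f has_vector_derivative f') (at x within S)" "f x \<noteq> 0"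
  shows "((\<lambda>t. inverse (f t)) has_vector_derivative - f' * (inverse (f x))\<^sup>2) (at x within S)"
  using field_vector_diff_chain_within[OF assms(1) DERIV_inverse[OF assms(2)]]
  by (simp add: o_def power2_eq_square)

lemma has_vector_derivative_exp:
  fixes f :: "real \<Rightarrow> 'a::{real_normed_field,banach}"
  assumes "(f has_vector_derivative f') (at x within S)"
  shows "((\<lambda>t. exp (f t)) has_vector_derivative f' * exp (f x)) (at x within S)"
  using field_vector_diff_chain_within[OF assms has_field_derivative_at_within[OF DERIV_exp]]
  by (simp add: o_def)

lemma linear_ode_solution:
  fixes f A a :: "real \<Rightarrow> 'a::{real_normed_field,banach}"
  assumes "convex I" "t0 \<in> I" "t \<in> I"
    and f: "\<And>t. t \<in> I \<Longrightarrow> (f has_vector_derivative a t * f t) (at t within I)"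
    and A: "\<And>t. t \<in> I \<Longrightarrow> (A has_vector_derivative a t) (at t within I)"
  shows "f t = f t0 * exp (A t - A t0)"
proof -
  have "((\<lambda>t. f t * exp (- A t)) has_vector_derivative 0) (at t within I)" if "t \<in> I" for t
  proof -
    have "((\<lambda>t. f t * exp (- A t)) has_vector_derivative
        f t * (- a t * exp (- A t)) + a t * f t * exp (- A t)) (at t within I)"
      by (intro has_vector_derivative_mult has_vector_derivative_exp has_vector_derivative_minus
          f A that)
    moreover have "f t * (- a t * exp (- A t)) + a t * f t * exp (- A t) = 0"
      by algebra
    ultimately show ?thesis
      by simp
  qed
  then obtain c where c: "\<And>t. t \<in> I \<Longrightarrow> f t * exp (- A t) = c"
    using has_vector_derivative_zero_constant[OF assms(1)] by blast
  have "f t = f t * exp (- A t) * exp (A t)"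
    by (simp add: mult.assoc flip: exp_add)
  also have "\<dots> = f t0 * (exp (- A t0) * exp (A t))"
    using c assms(2,3) by (simp add: mult.assoc)
  also have "exp (- A t0) * exp (A t) = exp (A t - A t0)"
    by (simp flip: exp_add)
  finally show ?thesis .
qed

lemma theta_has_real_derivative: "(theta \<nu> has_real_derivative exp (- \<nu> * t)) (at t within S)"
proof (cases "\<nu> = 0")
  case True
  then have "theta \<nu> = (\<lambda>t. t)"
    by (auto simp: theta_def)
  then show ?thesis
    using True by (auto intro!: derivative_eq_intros)
next
  case False
  then have "theta \<nu> = (\<lambda>t. (1 - exp (- \<nu> * t)) / \<nu>)"
    by (auto simp: theta_def)
  then show ?thesis
    using False by (auto intro!: derivative_eq_intros)
qed

lemma theta_0 [simp]: "theta \<nu> 0 = 0"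
  by (simp add: theta_def)

definition phase_integral :: "real \<Rightarrow> real \<Rightarrow> complex" where
  "phase_integral \<kappa> s =
     (if \<kappa> = 0 then of_real s else (exp (\<i> * of_real (\<kappa> * s)) - 1) / (\<i> * of_real \<kappa>))"

lemma phase_integral_0 [simp]: "phase_integral \<kappa> 0 = 0"
  by (simp add: phase_integral_def)

lemma phase_integral_has_vector_derivative:
  "(phase_integral \<kappa> has_vector_derivative exp (\<i> * of_real (\<kappa> * s))) (at s within S)"
proof (cases "\<kappa> = 0")
  case True
  then have "phase_integral \<kappa> = (\<lambda>s. of_real s)"
    by (auto simp: phase_integral_def)
  then show ?thesis
    using True by (auto intro!: derivative_eq_intros)
next
  case False
  have "((\<lambda>s. \<i> * of_real (\<kappa> * s)) has_vector_derivative \<i> * of_real \<kappa>) (at s within S)"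
    by (auto intro!: derivative_eq_intros)
  then have "((\<lambda>s. (exp (\<i> * of_real (\<kappa> * s)) - 1) / (\<i> * of_real \<kappa>)) has_vector_derivative
      (\<i> * of_real \<kappa> * exp (\<i> * of_real (\<kappa> * s)) - 0) / (\<i> * of_real \<kappa>)) (at s within S)"
    by (intro has_vector_derivative_divide has_vector_derivative_diff has_vector_derivative_exp
        has_vector_derivative_const)
  then have "((\<lambda>s. (exp (\<i> * of_real (\<kappa> * s)) - 1) / (\<i> * of_real \<kappa>)) has_vector_derivative
      exp (\<i> * of_real (\<kappa> * s))) (at s within S)"
    using False by simp
  moreover have "phase_integral \<kappa> = (\<lambda>s. (exp (\<i> * of_real (\<kappa> * s)) - 1) / (\<i> * of_real \<kappa>))"
    using False by (auto simp: phase_integral_def)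
  ultimately show ?thesis
    by simp
qed

lemma phase_integral_mem_sphere:
  assumes "\<kappa> \<noteq> 0"
  shows "phase_integral \<kappa> s \<in> sphere (\<i> / of_real \<kappa>) (1 / \<bar>\<kappa>\<bar>)"
proof -
  have "\<i> / of_real \<kappa> = - 1 / (\<i> * of_real \<kappa>)"
    using assms by (simp add: divide_simps)
  then have "\<i> / of_real \<kappa> - phase_integral \<kappa> s = - exp (\<i> * of_real (\<kappa> * s)) / (\<i> * of_real \<kappa>)"
    using assms by (simp add: phase_integral_def diff_divide_distrib)
  moreover have "cmod (- exp (\<i> * of_real (\<kappa> * s)) / (\<i> * of_real \<kappa>)) = 1 / \<bar>\<kappa>\<bar>"
    by (simp add: norm_divide norm_mult)
  ultimately show ?thesis
    by (simp add: dist_norm)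
qed

locale pole_dynamics =
  fixes \<nu> :: real and I :: "real set"
    and w1 vc :: "real \<Rightarrow> complex" and wav :: "real \<Rightarrow> real"
  assumes interval: "is_interval I" and zero_mem: "0 \<in> I"
    and vc_ne: "\<forall>t\<in>I. vc t \<noteq> -1"
    and ode1: "\<forall>t\<in>I. (w1 has_vector_derivative
                 ((\<i> * complex_of_real (wav t) - complex_of_real \<nu>) * w1 t
                   + 2 * (w1 t)\<^sup>2 / (1 + vc t))) (at t within I)"
    and ode2: "\<forall>t\<in>I. (vc has_vector_derivative w1 t) (at t within I)"
    and ode3: "\<forall>t\<in>I. (wav has_real_derivative (- \<nu> * wav t)) (at t within I)"
begin

lemma convex_domain: "convex I"
  using interval by (simp add: is_interval_convex)

lemma one_plus_vc_nonzero: "t \<in> I \<Longrightarrow> 1 + vc t \<noteq> 0"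
  using vc_ne by (metis add.commute add_eq_0_iff)

lemma wav_eq_exp: "t \<in> I \<Longrightarrow> wav t = wav 0 * exp (- \<nu> * t)"
proof -
  assume "t \<in> I"
  have "wav t = wav 0 * exp (- \<nu> * t - - \<nu> * 0)"
  proof (rule linear_ode_solution[OF convex_domain zero_mem \<open>t \<in> I\<close>])
    fix s assume "s \<in> I"
    show "(wav has_vector_derivative - \<nu> * wav s) (at s within I)"
      using ode3 \<open>s \<in> I\<close> by (simp add: has_real_derivative_iff_has_vector_derivative)
    show "((\<lambda>s. - \<nu> * s) has_vector_derivative - \<nu>) (at s within I)"
      by (auto intro!: derivative_eq_intros)
  qed
  then show ?thesis
    by simp
qed

lemma inverse_one_plus_vc_has_vector_derivative:
  "t \<in> I \<Longrightarrow> ((\<lambda>t. inverse (1 + vc t)) has_vector_derivative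
     - w1 t * (inverse (1 + vc t))\<^sup>2) (at t within I)"
  using has_vector_derivative_inverse[OF has_vector_derivative_add[OF
        has_vector_derivative_const ode2[rule_format]] one_plus_vc_nonzero]
  by simp

lemma w1_div_square_eq:
  "t \<in> I \<Longrightarrow> w1 t / (1 + vc t)\<^sup>2
     = w1 0 / (1 + vc 0)\<^sup>2 * exp (\<i> * of_real (wav 0 * theta \<nu> t) - of_real (\<nu> * t))"
proof -
  assume "t \<in> I"
  define z where "z t = inverse (1 + vc t)" for t
  define a where "a t = \<i> * of_real (wav t) - of_real \<nu>" for t
  have "w1 t * z t * z t = w1 0 * z 0 * z 0 * exp (\<i> * of_real (wav 0 * theta \<nu> t) - of_real (\<nu> * t)
      - (\<i> * of_real (wav 0 * theta \<nu> 0) - of_real (\<nu> * 0)))"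
  proof (rule linear_ode_solution[OF convex_domain zero_mem \<open>t \<in> I\<close>])
    fix s assume s: "s \<in> I"
    have "((\<lambda>t. w1 t * z t * z t) has_vector_derivative
        w1 s * z s * (- w1 s * (z s)\<^sup>2) + (w1 s * (- w1 s * (z s)\<^sup>2)
         + (a s * w1 s + 2 * (w1 s)\<^sup>2 / (1 + vc s)) * z s) * z s) (at s within I)"
      unfolding a_def z_def
      by (intro has_vector_derivative_mult inverse_one_plus_vc_has_vector_derivative s ode1[rule_format])
    moreover have "w1 s * z s * (- w1 s * (z s)\<^sup>2) + (w1 s * (- w1 s * (z s)\<^sup>2)
         + (a s * w1 s + 2 * (w1 s)\<^sup>2 / (1 + vc s)) * z s) * z s = a s * (w1 s * z s * z s)"
    proof -
      have "2 * (w1 s)\<^sup>2 / (1 + vc s) = 2 * (w1 s)\<^sup>2 * z s"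
        by (simp add: z_def divide_inverse)
      then show ?thesis
        by algebra
    qed
    ultimately show "((\<lambda>t. w1 t * z t * z t) has_vector_derivative a s * (w1 s * z s * z s)) (at s within I)"
      by simp
    show "((\<lambda>t. \<i> * of_real (wav 0 * theta \<nu> t) - of_real (\<nu> * t)) has_vector_derivative a s) (at s within I)"
      unfolding a_def wav_eq_exp[OF s]
      by (auto intro!: derivative_eq_intros theta_has_real_derivative)
  qed
  then show ?thesis
    by (simp add: z_def divide_inverse power2_eq_square mult.assoc)
qed

lemma inverse_one_plus_vc_eq:
  "t \<in> I \<Longrightarrow> inverse (1 + vc t)
     = inverse (1 + vc 0) - w1 0 / (1 + vc 0)\<^sup>2 * phase_integral (wav 0) (theta \<nu> t)"
proof -
  assume "t \<in> I"
  define q0 where "q0 = w1 0 / (1 + vc 0)\<^sup>2"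
  define P where "P t = phase_integral (wav 0) (theta \<nu> t)" for t
  have "((\<lambda>t. inverse (1 + vc t) + q0 * P t) has_vector_derivative 0) (at s within I)"
    if s: "s \<in> I" for s
  proof -
    have "(P has_vector_derivative exp (- \<nu> * s) *\<^sub>R exp (\<i> * of_real (wav 0 * theta \<nu> s))) (at s within I)"
      unfolding P_def[abs_def]
      using vector_diff_chain_within[OF theta_has_real_derivative[unfolded
          has_real_derivative_iff_has_vector_derivative] phase_integral_has_vector_derivative]
      by (simp add: o_def)
    also have "exp (- \<nu> * s) *\<^sub>R exp (\<i> * of_real (wav 0 * theta \<nu> s))
        = exp (\<i> * of_real (wav 0 * theta \<nu> s) - of_real (\<nu> * s))"
      by (simp add: scaleR_conv_of_real exp_diff exp_minus divide_inverse flip: exp_of_real)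
    finally have dP: "(P has_vector_derivative
        exp (\<i> * of_real (wav 0 * theta \<nu> s) - of_real (\<nu> * s))) (at s within I)" .
    have "((\<lambda>t. inverse (1 + vc t) + q0 * P t) has_vector_derivative
        - w1 s * (inverse (1 + vc s))\<^sup>2 + q0 * exp (\<i> * of_real (wav 0 * theta \<nu> s) - of_real (\<nu> * s)))
        (at s within I)"
      by (intro has_vector_derivative_add inverse_one_plus_vc_has_vector_derivative s
          has_vector_derivative_mult_right dP)
    moreover have "- w1 s * (inverse (1 + vc s))\<^sup>2
        + q0 * exp (\<i> * of_real (wav 0 * theta \<nu> s) - of_real (\<nu> * s)) = 0"
      using w1_div_square_eq[OF s] by (simp add: q0_def divide_inverse power_inverse)
    ultimately show ?thesis
      by simp
  qed
  then obtain c where "\<And>s. s \<in> I \<Longrightarrow> inverse (1 + vc s) + q0 * P s = c"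
    using has_vector_derivative_zero_constant[OF convex_domain] by blast
  from this[OF \<open>t \<in> I\<close>] this[OF zero_mem] show ?thesis
    by (simp add: P_def q0_def algebra_simps)
qed

lemma trajectory_of_wav0_nonzero:
  assumes "w1 0 \<noteq> 0" "wav 0 \<noteq> 0"
  shows "on_circle (vc ` I) \<or> on_line (vc ` I)"
proof -
  define q0 where "q0 = w1 0 / (1 + vc 0)\<^sup>2"
  define c where "c = inverse (1 + vc 0) - q0 * (\<i> / of_real (wav 0))"
  define S where "S = (\<lambda>t. inverse (1 + vc t)) ` I"
  have "cmod q0 * (1 / \<bar>wav 0\<bar>) > 0"
    using assms one_plus_vc_nonzero[OF zero_mem] by (simp add: q0_def)
  moreover have "S \<subseteq> sphere c (cmod q0 * (1 / \<bar>wav 0\<bar>))"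
  proof
    fix z assume "z \<in> S"
    then obtain t where "t \<in> I" "z = inverse (1 + vc t)"
      by (auto simp: S_def)
    then have "z = inverse (1 + vc 0) - q0 * phase_integral (wav 0) (theta \<nu> t)"
      using inverse_one_plus_vc_eq by (simp add: q0_def)
    then show "z \<in> sphere c (cmod q0 * (1 / \<bar>wav 0\<bar>))"
      unfolding c_def using diff_mult_mem_sphere[OF phase_integral_mem_sphere[OF assms(2)]] by simp
  qed
  moreover have "0 \<notin> S"
    using one_plus_vc_nonzero by (auto simp: S_def)
  ultimately have "on_circle (inverse ` S) \<or> on_line (inverse ` S)"
    by (rule inverse_image_sphere_on_circle_or_line)
  then have "on_circle ((\<lambda>z. 1 * z + - 1) ` inverse ` S) \<or> on_line ((\<lambda>z. 1 * z + - 1) ` inverse ` S)"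
    by (metis on_circle_affine_image on_line_affine_image one_neq_zero)
  moreover have "(\<lambda>z. 1 * z + - 1) ` inverse ` S = vc ` I"
    by (simp add: S_def image_image)
  ultimately show ?thesis
    by argo
qed

lemma vc_eq_of_wav0_zero:
  assumes "wav 0 = 0" "t \<in> I"
  shows "vc t = (vc 0 + 1) / (1 - w1 0 / (1 + vc 0) * of_real (theta \<nu> t)) - 1"
proof -
  define u0 where "u0 = 1 + vc 0"
  have u0: "u0 \<noteq> 0"
    using one_plus_vc_nonzero[OF zero_mem] by (simp add: u0_def)
  have "inverse (1 + vc t) = inverse u0 - w1 0 / u0\<^sup>2 * of_real (theta \<nu> t)"
    using inverse_one_plus_vc_eq[OF assms(2)] assms(1) by (simp add: u0_def phase_integral_def)
  also have "\<dots> = inverse u0 * (1 - w1 0 / u0 * of_real (theta \<nu> t))"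
    using u0 by (simp add: field_simps power2_eq_square)
  finally have "1 + vc t = u0 * inverse (1 - w1 0 / u0 * of_real (theta \<nu> t))"
    by (metis inverse_inverse_eq inverse_mult_distrib mult.commute)
  then have "vc t = u0 * inverse (1 - w1 0 / u0 * of_real (theta \<nu> t)) - 1"
    by (simp add: algebra_simps)
  then show ?thesis
    by (simp add: u0_def divide_inverse add.commute)
qed

lemma trajectory_of_wav0_zero:
  assumes "wav 0 = 0"
  defines "\<Omega> \<equiv> w1 0 / (1 + vc 0)"
  shows "(Im \<Omega> \<noteq> 0 \<longrightarrow> on_circle (vc ` I)) \<and> (Im \<Omega> = 0 \<longrightarrow> on_line (vc ` I))"
proof (intro conjI impI)
  have u0: "1 + vc 0 \<noteq> 0"
    using one_plus_vc_nonzero[OF zero_mem] .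
  have traj: "vc ` I \<subseteq> (\<lambda>z. (1 + vc 0) * z + - 1) ` range (\<lambda>s::real. inverse (1 - \<Omega> * of_real s))"
    using vc_eq_of_wav0_zero[OF assms(1)] by (auto simp: \<Omega>_def image_iff divide_inverse add.commute)
  show "on_circle (vc ` I)" if "Im \<Omega> \<noteq> 0"
    using on_circle_subset[OF traj on_circle_affine_image[OF u0 on_circle_inverse_line[OF that]]] .
  show "on_line (vc ` I)" if "Im \<Omega> = 0"
    using on_line_subset[OF traj on_line_affine_image[OF u0 on_line_inverse_real_line[OF that]]] .
qed

end

theorem mainTheorem14:
  fixes \<nu> :: real and I :: "real set"
    and w1 vc :: "real \<Rightarrow> complex" and wav :: "real \<Rightarrow> real"
  assumes nu: "\<nu> \<ge> 0"
    and I: "is_interval I" "0 \<in> I"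
    and vc0: "vc 0 \<noteq> -1"
    and w10: "w1 0 \<noteq> 0"
    and vc_ne: "\<forall>t\<in>I. vc t \<noteq> -1"
    and ode1: "\<forall>t\<in>I. (w1 has_vector_derivative
                 ((\<i> * complex_of_real (wav t) - complex_of_real \<nu>) * w1 t
                   + 2 * (w1 t)\<^sup>2 / (1 + vc t))) (at t within I)"
    and ode2: "\<forall>t\<in>I. (vc has_vector_derivative w1 t) (at t within I)"
    and ode3: "\<forall>t\<in>I. (wav has_real_derivative (- \<nu> * wav t)) (at t within I)"
  shows "(on_circle (vc ` I) \<or> on_line (vc ` I)) \<and>
         (wav 0 = 0 \<longrightarrow>
            (let \<Omega> = w1 0 / (1 + vc 0) in
               (\<forall>t\<in>I. vc t = (vc 0 + 1) / (1 - \<Omega> * complex_of_real (theta \<nu> t)) - 1) \<and>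
               (Im \<Omega> \<noteq> 0 \<longrightarrow> on_circle (vc ` I)) \<and>
               (Im \<Omega> = 0 \<longrightarrow> on_line (vc ` I))))"
proof -
  interpret pole_dynamics \<nu> I w1 vc wav
    using I vc_ne ode1 ode2 ode3 by unfold_locales
  show ?thesis
  proof (cases "wav 0 = 0")
    case True
    then show ?thesis
      using vc_eq_of_wav0_zero trajectory_of_wav0_zero unfolding Let_def by blast
  next
    case False
    then show ?thesis
      using trajectory_of_wav0_nonzero[OF w10] by blast
  qed
qed

end
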